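(* Let $G$ be a finite impartial game that is nimber-like. Then $G\equiv *n$ for some nonnegative integer $n$.
   Context: A game is identified with its set of options (written $\{g_1,\dots,g_k\}$); $\mathbf{E}$ denotes the game with no options, and $G\equiv H$ means $G$ and $H$ have the same set of options, recursively. Nimbers: $*0\equiv\mathbf{E}$ and $*n\equiv\{*0,*1,\dots,*(n-1)\}$. A game $G$ has hereditary transitivity if whenever $g$ is an option of $G$ and $g'$ is an option of $g$, then $g'$ is (identical to) an option of $G$. A game is nimber-like if it has hereditary transitivity and each of its options is nimber-like (recursively; equivalently, $G$ and every game reachable from $G$ by a sequence of moves has hereditary transitivity). *)

theory Defs
  imports Main "HOL-Library.FSet"
begin

text \<open>Finite impartial games, identified with their (finite) set of options,
recursively. Identity of games (the relation written with three bars) is HOL equality.\<close>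
datatype game = Game (opts: "game fset")

definition E :: game where "E = Game {||}"

fun nimber :: "nat \<Rightarrow> game" where
  "nimber n = Game (fset_of_list (map nimber [0..<n]))"

definition hered_trans :: "game \<Rightarrow> bool" where
  "hered_trans G \<longleftrightarrow> (\<forall>g. g |\<in>| opts G \<longrightarrow> (\<forall>g'. g' |\<in>| opts g \<longrightarrow> g' |\<in>| opts G))"

inductive nimber_like :: "game \<Rightarrow> bool" where
  "hered_trans G \<Longrightarrow> (\<And>g. g |\<in>| opts G \<Longrightarrow> nimber_like g) \<Longrightarrow> nimber_like G"

end

theory Submission
  imports Defs
begin

text \<open>By induction, every option of a nimber-like game is a nimber. Hereditary transitivity
makes the set of indices of these nimbers downward closed, and it is finite, so it is an
initial segment {0, ..., n-1}; the game then has exactly the options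
of the nimber n.\<close>

lemma not_opt_self: "\<not> x |\<in>| opts x"
proof (induction x)
  case (Game fs)
  then show ?case by (metis game.sel)
qed

lemma opts_nimber: "x |\<in>| opts (nimber n) \<longleftrightarrow> (\<exists>a<n. x = nimber a)"
  by (subst nimber.simps) (auto simp: fset_of_list_elem)

declare nimber.simps[simp del]

lemma nimber_inject: "nimber a = nimber b \<longleftrightarrow> a = b"
proof
  assume eq: "nimber a = nimber b"
  show "a = b"
  proof (rule linorder_cases[of a b])
    assume "a < b"
    then have "nimber a |\<in>| opts (nimber b)" by (auto simp: opts_nimber)
    with eq not_opt_self show ?thesis by metis
  next
    assume "b < a"
    then have "nimber b |\<in>| opts (nimber a)" by (auto simp: opts_nimber)
    with eq not_opt_self show ?thesis by metis
  qed
qed simp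

lemma finite_downward_closed_eq_lessThan:
  fixes S :: "nat set"
  assumes "finite S" and down: "\<And>a b. a \<in> S \<Longrightarrow> b < a \<Longrightarrow> b \<in> S"
  shows "\<exists>n. S = {..<n}"
proof -
  obtain k where "k \<notin> S"
    using ex_new_if_finite[OF infinite_UNIV_nat \<open>finite S\<close>] by blast
  define n where "n = (LEAST k. k \<notin> S)"
  have "n \<notin> S" unfolding n_def by (rule LeastI) fact
  have "a \<in> S \<longleftrightarrow> a < n" for a
  proof
    assume "a \<in> S"
    with \<open>n \<notin> S\<close> down show "a < n" by (metis linorder_neqE_nat)
  next
    assume "a < n"
    then show "a \<in> S" unfolding n_def using not_less_Least by blast
  qed
  then show ?thesis by blast
qed

lemma hered_trans_nimber_opts_eq_nimber:
  assumes "hered_trans G" and nimber_opts: "\<And>g. g |\<in>| opts G \<Longrightarrow> \<exists>a. g = nimber a"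
  shows "\<exists>n. G = nimber n"
proof -
  define S where "S = {a. nimber a |\<in>| opts G}"
  have "finite S"
  proof (rule finite_imageD)
    show "finite (nimber ` S)"
      by (rule finite_subset[of _ "fset (opts G)"]) (auto simp: S_def)
    show "inj_on nimber S" by (simp add: inj_on_def nimber_inject)
  qed
  moreover have "b \<in> S" if "a \<in> S" "b < a" for a b
  proof -
    from \<open>b < a\<close> have "nimber b |\<in>| opts (nimber a)" by (auto simp: opts_nimber)
    with \<open>a \<in> S\<close> \<open>hered_trans G\<close> show ?thesis unfolding S_def hered_trans_def by blast
  qed
  ultimately obtain n where S: "S = {..<n}"
    using finite_downward_closed_eq_lessThan by blast
  have "opts G = opts (nimber n)"
  proof (rule fset_eqI)
    fix x
    show "x |\<in>| opts G \<longleftrightarrow> x |\<in>| opts (nimber n)"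
      using nimber_opts[of x] S unfolding S_def opts_nimber by auto
  qed
  then show ?thesis by (metis game.expand)
qed

theorem theorem3p3:
  fixes G :: game
  assumes "nimber_like G"
  shows "\<exists>n::nat. G = nimber n"
  using assms
proof (induction rule: nimber_like.induct)
  case (1 G)
  then show ?case using hered_trans_nimber_opts_eq_nimber by blast
qed

end
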